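(* Let $\kappa$ be a regular infinite cardinal and $\mu$ a singular cardinal with $\mathrm{cf}(\mu)=\kappa$. (1) (a) $\mu^{<\kappa}\le\mathrm{non}(\mathcal M_\kappa({}^{\kappa}\mu,\kappa))$; (b) $2^{<\mu}\le\mathrm{non}(\mathcal M_\kappa({}^{\mu}2,\mu))$; (c) $\mu^{<\mu}\le\min\{\mathrm{non}(\mathcal M_\kappa({}^{\mu}\mu,\mathrm{bd})),\mathrm{non}(\mathcal M_\kappa({}^{\mu}\mu,\mu))\}$. (2) (a) $\mathrm{non}(\mathcal M_\kappa({}^{\kappa}\kappa,\kappa))\le\mathrm{non}(\mathcal M_\kappa({}^{\kappa}\mu,\kappa))$; (b) $\mathrm{non}(\mathcal M_\kappa({}^{\kappa}\mu,\kappa))\le\mathrm{non}(\mathcal M_\kappa({}^{\mu}\mu,\mathrm{bd}))$; (c) $\mathrm{non}(\mathcal M_\kappa({}^{\kappa}\mu,\kappa))\le\mathrm{non}(\mathcal M_\kappa({}^{\mu}\mu,\kappa))$; (d) $\mathrm{non}(\mathcal M_\kappa({}^{\mu}2,\mu))\le\mathrm{non}(\mathcal M_\kappa({}^{\mu}\mu,\mu))$; (e) $\mathrm{non}(\mathcal M_\kappa({}^{\kappa}\kappa,\kappa))\le\mathrm{non}(\mathcal M_\kappa({}^{\mu}\kappa,\kappa))$; (f) $\mathrm{non}(\mathcal M_\kappa({}^{\mu}\kappa,\kappa))\le\mathrm{non}(\mathcal M_\kappa({}^{\mu}\mu,\kappa))$. (3) $\mathrm{cf}([\mu]^{\kappa})\le\min\{\mathrm{non}(\mathcal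 M_\kappa({}^{\kappa}\mu,\kappa)),\mathrm{non}(\mathcal M_\kappa({}^{\mu}2,\mu))\}$.
   Context: For ordinals $\delta,\rho$, ${}^{\delta}\rho$ is the set of functions $\delta\to\rho$; for a partial function $s\colon\delta\rightharpoonup\rho$, $[s]=\{f\in{}^{\delta}\rho: s\subseteq f\}$. Topologies on ${}^{\delta}\rho$: ${<}\kappa$-box (base $[s]$, $|\mathrm{dom}(s)|<\kappa$), denoted $\kappa$; ${<}\mu$-box (base $[s]$, $|\mathrm{dom}(s)|<\mu$), denoted $\mu$; bounded (base $[s]$, $s\in{}^{\alpha}\rho$, $\alpha<\delta$), denoted $\mathrm{bd}$. (On ${}^{\kappa}\mu$ the bounded and ${<}\kappa$-box topologies coincide.) A set is $\kappa$-meagre if it is a union of at most $\kappa$ nowhere dense sets; $\mathcal M_\kappa(X,\tau)$ is the ideal of $\kappa$-meagre subsets; $\mathrm{non}(\mathcal I)$ is the least size of a subset of the space not in $\mathcal I$. $\mathrm{cf}([\mu]^{\kappa})$ is the least size of a family $\mathcal F\subseteq[\mu]^{\le\kappa}$ such that every subset of $\mu$ of size $\le\kappa$ is contained in some member of $\mathcal F$. *)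

theory Defs
  imports "HOL-Analysis.Analysis"
begin

unbundle cardinal_syntax

text \<open>Cardinals/ordinals are represented by well-order relations (HOL's BNF cardinal
library): an ordinal delta is a well-order, its underlying set is Field delta; a cardinal is
a Card_order.  The function space of functions from D to R is Func D R (functions that are
undefined outside D).\<close>

text \<open>The basic clopen set [s] for the partial function s = g restricted to A.\<close>
definition cyl :: "'d set \<Rightarrow> 'r set \<Rightarrow> 'd set \<Rightarrow> ('d \<Rightarrow> 'r) \<Rightarrow> ('d \<Rightarrow> 'r) set" where
  "cyl D R A g = {f \<in> Func D R. \<forall>x\<in>A. f x = g x}"

definition box_top :: "'d set \<Rightarrow> 'r set \<Rightarrow> 'c rel \<Rightarrow> ('d \<Rightarrow> 'r) topology" where
  "box_top D R lam = topology_generated_by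
     {cyl D R A g | A g. A \<subseteq> D \<and> (card_of A) <o lam \<and> g ` A \<subseteq> R}"

definition bd_top :: "'d rel \<Rightarrow> 'r set \<Rightarrow> ('d \<Rightarrow> 'r) topology" where
  "bd_top delta R = topology_generated_by
     {cyl (Field delta) R (underS delta a) g | a g. a \<in> Field delta \<and> g ` underS delta a \<subseteq> R}"

definition nowhere_densein :: "'a topology \<Rightarrow> 'a set \<Rightarrow> bool" where
  "nowhere_densein T S \<longleftrightarrow> S \<subseteq> topspace T \<and> T interior_of (T closure_of S) = {}"

definition kmeagre :: "'c rel \<Rightarrow> 'a topology \<Rightarrow> 'a set \<Rightarrow> bool" where
  "kmeagre kappa T Y \<longleftrightarrow> Y \<subseteq> topspace T \<and>
     (\<exists>N. (card_of N) <=o kappa \<and> (\<forall>S\<in>N. nowhere_densein T S) \<and> Y \<subseteq> \<Union>N)"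

text \<open>non(M_kappa(T)) \<le> non(M_kappa(T')) : every non-meagre set of T' has a non-meagre set of T
 of at most its size.\<close>
definition non_le_non :: "'c rel \<Rightarrow> 'a topology \<Rightarrow> 'b topology \<Rightarrow> bool" where
  "non_le_non kappa T T' \<longleftrightarrow>
     (\<forall>Y'. Y' \<subseteq> topspace T' \<and> \<not> kmeagre kappa T' Y' \<longrightarrow>
        (\<exists>Y. Y \<subseteq> topspace T \<and> \<not> kmeagre kappa T Y \<and> (card_of Y) <=o (card_of Y')))"

text \<open>rho^{<lam} \<le> (card_of Z), where rho^{<lam} = sup of rho^nu over cardinals nu < lam.\<close>
definition pow_less_le :: "'r set \<Rightarrow> 'd rel \<Rightarrow> 'z set \<Rightarrow> bool" where
  "pow_less_le R lam Z \<longleftrightarrow> (\<forall>A. A \<subseteq> Field lam \<and> (card_of A) <o lam \<longrightarrow> (card_of (Func A R)) <=o (card_of Z))"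

text \<open>rho^{<lam} \<le> non(M_kappa(T)).\<close>
definition pow_less_le_non :: "'r set \<Rightarrow> 'd rel \<Rightarrow> 'c rel \<Rightarrow> 'a topology \<Rightarrow> bool" where
  "pow_less_le_non R lam kappa T \<longleftrightarrow>
     (\<forall>Y. Y \<subseteq> topspace T \<and> \<not> kmeagre kappa T Y \<longrightarrow> pow_less_le R lam Y)"

text \<open>cf([mu]^kappa) \<le> (card_of Z).\<close>
definition cf_bracket_le :: "'m rel \<Rightarrow> 'k rel \<Rightarrow> 'z set \<Rightarrow> bool" where
  "cf_bracket_le mu kappa Z \<longleftrightarrow>
     (\<exists>F. F \<subseteq> {B. B \<subseteq> Field mu \<and> (card_of B) <=o kappa} \<and>
          (\<forall>B. B \<subseteq> Field mu \<and> (card_of B) <=o kappa \<longrightarrow> (\<exists>C\<in>F. B \<subseteq> C)) \<and> (card_of F) <=o (card_of Z))"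

text \<open>cf([mu]^kappa) \<le> non(M_kappa(T)).\<close>
definition cf_bracket_le_non :: "'m rel \<Rightarrow> 'k rel \<Rightarrow> 'a topology \<Rightarrow> bool" where
  "cf_bracket_le_non mu kappa T \<longleftrightarrow>
     (\<forall>Y. Y \<subseteq> topspace T \<and> \<not> kmeagre kappa T Y \<longrightarrow> cf_bracket_le mu kappa Y)"

definition cofinality_is :: "'m rel \<Rightarrow> 'k rel \<Rightarrow> bool" where
  "cofinality_is mu kappa \<longleftrightarrow>
     (\<exists>K. K \<subseteq> Field mu \<and> cofinal K mu \<and> (card_of K) =o kappa) \<and>
     (\<forall>K. K \<subseteq> Field mu \<and> cofinal K mu \<longrightarrow> kappa <=o (card_of K))"

end

theory Submission
  imports Defs
begin

(*
  All three groups of inequalities are proved by exhibiting nowhere dense sets in topologies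
  generated by cylinders [g|A], A ranging over a directed family of supports.

  (1) A set Y of fewer than |R^A| functions misses some pattern on any fresh copy of A, and
  fixing that pattern yields a basic open set disjoint from Y; so Y is nowhere dense as soon
  as every support can be enlarged by a fresh copy of A.  For the bounded topology on mu^mu
  the room is provided by mu being a limit cardinal.

  (2) For a reindexing f |-> pr o f o e with e injective and pr surjective, every nonempty
  open set of the source contains a basic open set mapped into any prescribed basic open
  subset of a suitable target cylinder.  Hence preimages of nowhere dense sets are nowhere
  dense and the image of a non-meagre set is non-meagre.  For (2b), e is a strictly increasing
  cofinal kappa-sequence in mu: every initial segment of mu contains fewer than kappa of its
  terms.

  (3) Assign to each f a set C f of size at most kappa such that, for every b, the set of f
  with b not in C f is nowhere dense; then {C f | f in Y} is cofinal in [mu]^kappa for every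
  non-meagre Y.  On mu^kappa take C f = range f.  On 2^mu, f decodes b at a point k of a
  fixed cofinal set of size kappa if for almost all c < k, b is the least x with
  f (code (k, c, x)); each k decodes at most one b, and any b can be forced on a block of
  size < mu lying outside a given support.
*)

section \<open>Cardinal arithmetic\<close>

lemma card_of_finite_ordLess:
  "Card_order r \<Longrightarrow> infinite (Field r) \<Longrightarrow> finite A \<Longrightarrow> |A| <o r"
  by (metis Field_card_of card_of_Well_order card_order_on_well_order_on finite_ordLess_infinite)

lemma card_of_Times_self_ordLess:
  assumes r: "Card_order r" "infinite (Field r)" and C: "|C| <o r"
  shows "|C \<times> C| <o r"
proof (cases "finite C")
  case True
  then show ?thesis by (intro card_of_finite_ordLess[OF r]) simp
next
  case False
  then show ?thesis using card_of_Times_same_infinite C ordIso_ordLess_trans by blast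
qed

lemma card_of_Times_ordLess:
  assumes r: "Card_order r" "infinite (Field r)" and A: "|A| <o r" and B: "|B| <o r"
  shows "|A \<times> B| <o r"
proof (cases "|A| \<le>o |B|")
  case True
  then have "|A \<times> B| \<le>o |B \<times> B|" by (rule card_of_Times_mono1)
  then show ?thesis using card_of_Times_self_ordLess[OF r B] ordLeq_ordLess_trans by blast
next
  case False
  then have "|B| \<le>o |A|" using ordLess_or_ordLeq[OF card_of_Well_order card_of_Well_order]
    ordLess_imp_ordLeq by blast
  then have "|A \<times> B| \<le>o |A \<times> A|" by (rule card_of_Times_mono2)
  then show ?thesis using card_of_Times_self_ordLess[OF r A] ordLeq_ordLess_trans by blast
qed

lemma card_of_ordLeq_Diff:
  assumes "infinite A" "|B| <o |A|"
  shows "|A| \<le>o |A - B|"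
proof -
  have "\<not> |A - B| <o |A|"
  proof
    assume "|A - B| <o |A|"
    then have "|(A - B) \<union> B| <o |A|" using card_of_Un_ordLess_infinite assms by blast
    moreover have "|A| \<le>o |(A - B) \<union> B|" by (rule card_of_mono1) blast
    ultimately show False using not_ordLess_ordLeq by blast
  qed
  then show ?thesis using ordLess_or_ordLeq[OF card_of_Well_order card_of_Well_order] by blast
qed

lemma underS_subset_if_card_ordLess:
  assumes r: "Well_order r" and "a \<in> Field r" "b \<in> Field r" "|underS r a| <o |underS r b|"
  shows "underS r a \<subseteq> underS r b"
proof -
  have lin: "Linear_order r" using r by (simp add: well_order_on_def)
  have "\<not> underS r b \<subseteq> underS r a" using assms(4) card_of_mono1 not_ordLess_ordLeq by blast
  then have "(b, a) \<notin> r" using underS_incl_iff[OF lin assms(3,2)] by blast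
  then have "(a, b) \<in> r" using wo_rel.TOTALS[of r] r assms(2,3) by (auto simp: wo_rel_def)
  then show ?thesis using underS_incl_iff[OF lin assms(2,3)] by blast
qed

section \<open>Function spaces topologised by cylinders over directed supports\<close>

definition supp_top :: "'d set \<Rightarrow> 'r set \<Rightarrow> 'd set set \<Rightarrow> ('d \<Rightarrow> 'r) topology" where
  "supp_top D R AA = topology_generated_by {cyl D R A g | A g. A \<in> AA \<and> g ` A \<subseteq> R}"

definition directed_supports :: "'d set \<Rightarrow> 'd set set \<Rightarrow> bool" where
  "directed_supports D AA \<longleftrightarrow>
     AA \<noteq> {} \<and> (\<forall>A\<in>AA. A \<subseteq> D) \<and> (\<forall>A1\<in>AA. \<forall>A2\<in>AA. \<exists>A3\<in>AA. A1 \<union> A2 \<subseteq> A3)"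

lemma directed_supportsD:
  assumes "directed_supports D AA" "A1 \<in> AA" "A2 \<in> AA"
  shows "\<exists>A3\<in>AA. A1 \<subseteq> A3 \<and> A2 \<subseteq> A3"
  using assms unfolding directed_supports_def by (meson Un_subset_iff)

lemma directed_supports_subset: "directed_supports D AA \<Longrightarrow> A \<in> AA \<Longrightarrow> A \<subseteq> D"
  unfolding directed_supports_def by simp

lemma box_top_eq_supp_top: "box_top D R lam = supp_top D R {A. A \<subseteq> D \<and> |A| <o lam}"
  unfolding box_top_def supp_top_def by (rule arg_cong[where f = topology_generated_by]) auto

lemma bd_top_eq_supp_top: "bd_top r R = supp_top (Field r) R {underS r a | a. a \<in> Field r}"
  unfolding bd_top_def supp_top_def by (rule arg_cong[where f = topology_generated_by]) blast

lemma directed_supports_small: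
  assumes "Card_order lam" "infinite (Field lam)"
  shows "directed_supports D {A. A \<subseteq> D \<and> |A| <o lam}"
  unfolding directed_supports_def
proof (intro conjI ballI)
  show "{A. A \<subseteq> D \<and> |A| <o lam} \<noteq> {}"
    using card_of_finite_ordLess[OF assms finite.emptyI] by blast
next
  fix A1 A2 assume "A1 \<in> {A. A \<subseteq> D \<and> |A| <o lam}" "A2 \<in> {A. A \<subseteq> D \<and> |A| <o lam}"
  then have "A1 \<union> A2 \<in> {A. A \<subseteq> D \<and> |A| <o lam}"
    using card_of_Un_ordLess_infinite_Field[OF assms(2,1)] by blast
  then show "\<exists>A3\<in>{A. A \<subseteq> D \<and> |A| <o lam}. A1 \<union> A2 \<subseteq> A3" by blast
qed auto

lemma directed_supports_underS:
  assumes r: "Well_order r" and "Field r \<noteq> {}"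
  shows "directed_supports (Field r) {underS r a | a. a \<in> Field r}"
  unfolding directed_supports_def
proof (intro conjI ballI)
  have lin: "Linear_order r" using r by (simp add: well_order_on_def)
  fix A1 A2 assume "A1 \<in> {underS r a | a. a \<in> Field r}" "A2 \<in> {underS r a | a. a \<in> Field r}"
  then obtain a1 a2 where a12: "a1 \<in> Field r" "a2 \<in> Field r" "A1 = underS r a1" "A2 = underS r a2"
    by blast
  have "(a1, a2) \<in> r \<or> (a2, a1) \<in> r" using wo_rel.TOTALS[of r] r a12 by (simp add: wo_rel_def)
  then show "\<exists>A3\<in>{underS r a | a. a \<in> Field r}. A1 \<union> A2 \<subseteq> A3"
  proof
    assume "(a1, a2) \<in> r"
    then have "A1 \<subseteq> A2" using underS_incl_iff[OF lin a12(1,2)] a12(3,4) by simp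
    then show ?thesis using \<open>A2 \<in> _\<close> by blast
  next
    assume "(a2, a1) \<in> r"
    then have "A2 \<subseteq> A1" using underS_incl_iff[OF lin a12(2,1)] a12(3,4) by simp
    then show ?thesis using \<open>A1 \<in> _\<close> by blast
  qed
next
  show "{underS r a | a. a \<in> Field r} \<noteq> {}" using assms(2) by blast
next
  fix A assume "A \<in> {underS r a | a. a \<in> Field r}"
  then show "A \<subseteq> Field r" using underS_Field by fastforce
qed

lemma cyl_subset_Func: "cyl D R A g \<subseteq> Func D R"
  unfolding cyl_def by auto

lemma in_cyl_self: "f \<in> Func D R \<Longrightarrow> f \<in> cyl D R A f"
  unfolding cyl_def by auto

lemma cyl_antimono: "A \<subseteq> A' \<Longrightarrow> f' \<in> cyl D R A f \<Longrightarrow> cyl D R A' f' \<subseteq> cyl D R A f"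
  unfolding cyl_def by auto

lemma cyl_eq: "f \<in> cyl D R A g \<Longrightarrow> cyl D R A f = cyl D R A g"
  unfolding cyl_def by auto

context
  fixes D :: "'d set" and AA :: "'d set set"
  assumes AA: "directed_supports D AA"
begin

lemma topspace_supp_top: "topspace (supp_top D R AA) = Func D R"
proof -
  obtain A0 where "A0 \<in> AA" "A0 \<subseteq> D"
    using AA unfolding directed_supports_def by (metis ex_in_conv)
  then have "f \<in> cyl D R A0 f \<and> f ` A0 \<subseteq> R" if "f \<in> Func D R" for f
    using that in_cyl_self unfolding Func_def by blast
  then have "Func D R \<subseteq> \<Union>{cyl D R A g | A g. A \<in> AA \<and> g ` A \<subseteq> R}"
    using \<open>A0 \<in> AA\<close> by blast
  moreover have "\<Union>{cyl D R A g | A g. A \<in> AA \<and> g ` A \<subseteq> R} \<subseteq> Func D R"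
    using cyl_subset_Func by blast
  ultimately show ?thesis unfolding supp_top_def topology_generated_by_topspace by blast
qed

lemma openin_supp_top_cyl:
  assumes "A \<in> AA" "f \<in> Func D R"
  shows "openin (supp_top D R AA) (cyl D R A f)"
proof -
  have "f ` A \<subseteq> R" using assms directed_supports_subset[OF AA] unfolding Func_def by blast
  then show ?thesis unfolding supp_top_def using assms(1) by (intro topology_generated_by_Basis) blast
qed

lemma openin_supp_top_cyl_subset:
  assumes "openin (supp_top D R AA) U" "f \<in> U"
  shows "\<exists>A\<in>AA. cyl D R A f \<subseteq> U"
proof -
  have "generate_topology_on {cyl D R A g | A g. A \<in> AA \<and> g ` A \<subseteq> R} U"
    using assms(1) unfolding supp_top_def by (rule openin_topology_generated_by)
  then have "\<forall>f\<in>U. \<exists>A\<in>AA. cyl D R A f \<subseteq> U"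
  proof (induction rule: generate_topology_on.induct)
    case (Int U1 U2)
    show ?case
    proof
      fix f assume "f \<in> U1 \<inter> U2"
      then obtain A1 A2 where A12: "A1 \<in> AA" "cyl D R A1 f \<subseteq> U1" "A2 \<in> AA" "cyl D R A2 f \<subseteq> U2"
        using Int.IH by blast
      obtain A3 where "A3 \<in> AA" "A1 \<subseteq> A3" "A2 \<subseteq> A3"
        using directed_supportsD[OF AA A12(1,3)] by blast
      moreover have "cyl D R A3 f \<subseteq> cyl D R A1 f \<inter> cyl D R A2 f"
        using \<open>A1 \<subseteq> A3\<close> \<open>A2 \<subseteq> A3\<close> unfolding cyl_def by auto
      ultimately show "\<exists>A\<in>AA. cyl D R A f \<subseteq> U1 \<inter> U2" using A12 by blast
    qed
  next
    case (UN UU)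
    then show ?case by (meson Union_iff Union_upper order_trans)
  next
    case (Basis U)
    then show ?case using cyl_eq by blast
  qed simp
  then show ?thesis using assms(2) by blast
qed

end

lemma nowhere_densein_iff:
  "nowhere_densein T S \<longleftrightarrow> S \<subseteq> topspace T \<and>
     (\<forall>U. openin T U \<and> U \<noteq> {} \<longrightarrow> (\<exists>V. openin T V \<and> V \<noteq> {} \<and> V \<subseteq> U \<and> V \<inter> S = {}))"
proof (cases "S \<subseteq> topspace T")
  case True
  have "T interior_of (T closure_of S) = {} \<longleftrightarrow>
        (\<forall>U. openin T U \<and> U \<noteq> {} \<longrightarrow> (\<exists>V. openin T V \<and> V \<noteq> {} \<and> V \<subseteq> U \<and> V \<inter> S = {}))"
  proof (intro iffI allI impI)
    fix U assume empty: "T interior_of (T closure_of S) = {}" and U: "openin T U \<and> U \<noteq> {}"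
    have "openin T (U - T closure_of S)" using U openin_diff closedin_closure_of by blast
    moreover have "U - T closure_of S \<noteq> {}" using empty U unfolding interior_of_eq_empty_alt by blast
    ultimately show "\<exists>V. openin T V \<and> V \<noteq> {} \<and> V \<subseteq> U \<and> V \<inter> S = {}"
      using closure_of_subset[OF True] by blast
  next
    assume V: "\<forall>U. openin T U \<and> U \<noteq> {} \<longrightarrow> (\<exists>V. openin T V \<and> V \<noteq> {} \<and> V \<subseteq> U \<and> V \<inter> S = {})"
    show "T interior_of (T closure_of S) = {}"
      unfolding interior_of_eq_empty_alt
    proof (intro allI impI)
      fix U assume "openin T U \<and> U \<noteq> {}"
      then obtain V where "openin T V" "V \<noteq> {}" "V \<subseteq> U" "V \<inter> S = {}" using V by blast
      then have "V \<inter> T closure_of S = {}" using openin_Int_closure_of_eq_empty[OF \<open>openin T V\<close>] by simp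
      then have "V \<subseteq> U - T closure_of S" using \<open>V \<subseteq> U\<close> by blast
      then show "U - T closure_of S \<noteq> {}" using \<open>V \<noteq> {}\<close> by blast
    qed
  qed
  then show ?thesis unfolding nowhere_densein_def using True by blast
qed (simp add: nowhere_densein_def)

lemma nowhere_densein_supp_topI:
  assumes AA: "directed_supports D AA" and S: "S \<subseteq> Func D R"
    and escape: "\<And>f A. f \<in> Func D R \<Longrightarrow> A \<in> AA \<Longrightarrow>
      \<exists>f'\<in>cyl D R A f. \<exists>A'\<in>AA. A \<subseteq> A' \<and> cyl D R A' f' \<inter> S = {}"
  shows "nowhere_densein (supp_top D R AA) S"
  unfolding nowhere_densein_iff topspace_supp_top[OF AA]
proof (intro conjI S allI impI)
  fix U assume U: "openin (supp_top D R AA) U \<and> U \<noteq> {}"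
  then obtain f where "f \<in> U" by blast
  then have f: "f \<in> Func D R" using openin_subset U topspace_supp_top[OF AA] by blast
  obtain A where A: "A \<in> AA" "cyl D R A f \<subseteq> U"
    using openin_supp_top_cyl_subset[OF AA] U \<open>f \<in> U\<close> by blast
  obtain f' A' where f': "f' \<in> cyl D R A f" "A' \<in> AA" "A \<subseteq> A'" "cyl D R A' f' \<inter> S = {}"
    using escape[OF f A(1)] by blast
  have "f' \<in> Func D R" using f'(1) cyl_subset_Func by blast
  have "openin (supp_top D R AA) (cyl D R A' f')" by (rule openin_supp_top_cyl[OF AA f'(2) \<open>f' \<in> Func D R\<close>])
  moreover have "cyl D R A' f' \<noteq> {}" using in_cyl_self[OF \<open>f' \<in> Func D R\<close>] by blast
  moreover have "cyl D R A' f' \<subseteq> U" using cyl_antimono[OF f'(3,1)] A(2) by blast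
  ultimately show "\<exists>V. openin (supp_top D R AA) V \<and> V \<noteq> {} \<and> V \<subseteq> U \<and> V \<inter> S = {}"
    using f'(4) by blast
qed

section \<open>Comparing non(M_kappa) along reindexings\<close>

lemma nowhere_densein_preimage:
  assumes lift: "\<And>U. openin S U \<Longrightarrow> U \<noteq> {} \<Longrightarrow> \<exists>W. openin T W \<and> W \<noteq> {} \<and>
      (\<forall>V. openin T V \<and> V \<noteq> {} \<and> V \<subseteq> W \<longrightarrow> (\<exists>U'. openin S U' \<and> U' \<noteq> {} \<and> U' \<subseteq> U \<and> \<phi> ` U' \<subseteq> V))"
    and N: "nowhere_densein T N"
  shows "nowhere_densein S {x\<in>topspace S. \<phi> x \<in> N}"
  unfolding nowhere_densein_iff
proof (intro conjI allI impI)
  fix U assume "openin S U \<and> U \<noteq> {}"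
  then obtain W where W: "openin T W" "W \<noteq> {}" and
    W_lift: "\<And>V. openin T V \<Longrightarrow> V \<noteq> {} \<Longrightarrow> V \<subseteq> W \<Longrightarrow>
      \<exists>U'. openin S U' \<and> U' \<noteq> {} \<and> U' \<subseteq> U \<and> \<phi> ` U' \<subseteq> V"
    using lift by meson
  obtain V where V: "openin T V" "V \<noteq> {}" "V \<subseteq> W" "V \<inter> N = {}"
    using N W unfolding nowhere_densein_iff by meson
  obtain U' where "openin S U'" "U' \<noteq> {}" "U' \<subseteq> U" "\<phi> ` U' \<subseteq> V"
    using W_lift[OF V(1-3)] by blast
  moreover have "U' \<inter> {x\<in>topspace S. \<phi> x \<in> N} = {}" using \<open>\<phi> ` U' \<subseteq> V\<close> V(4) by blast
  ultimately show "\<exists>U'. openin S U' \<and> U' \<noteq> {} \<and> U' \<subseteq> U \<and> U' \<inter> {x\<in>topspace S. \<phi> x \<in> N} = {}"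
    by blast
qed auto

lemma non_le_non_if_nowhere_dense_preimage:
  assumes "\<phi> ` topspace S \<subseteq> topspace T"
    and "\<And>N. nowhere_densein T N \<Longrightarrow> nowhere_densein S {x\<in>topspace S. \<phi> x \<in> N}"
  shows "non_le_non kappa T S"
  unfolding non_le_non_def
proof (intro allI impI)
  fix Y assume Y: "Y \<subseteq> topspace S \<and> \<not> kmeagre kappa S Y"
  have "\<not> kmeagre kappa T (\<phi> ` Y)"
  proof
    assume "kmeagre kappa T (\<phi> ` Y)"
    then obtain NN where NN: "|NN| \<le>o kappa" "\<forall>N\<in>NN. nowhere_densein T N" "\<phi> ` Y \<subseteq> \<Union>NN"
      unfolding kmeagre_def by blast
    let ?NN' = "(\<lambda>N. {x\<in>topspace S. \<phi> x \<in> N}) ` NN"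
    have "|?NN'| \<le>o kappa" using card_of_image NN(1) ordLeq_transitive by blast
    moreover have "\<forall>N\<in>?NN'. nowhere_densein S N" using NN(2) assms(2) by blast
    moreover have "Y \<subseteq> \<Union>?NN'" using NN(3) Y by blast
    ultimately have "kmeagre kappa S Y" unfolding kmeagre_def using Y by blast
    then show False using Y by blast
  qed
  moreover have "\<phi> ` Y \<subseteq> topspace T" using Y assms(1) by blast
  ultimately show "\<exists>Y'. Y' \<subseteq> topspace T \<and> \<not> kmeagre kappa T Y' \<and> |Y'| \<le>o |Y|"
    using card_of_image[of \<phi> Y] by blast
qed

definition reindex :: "'i set \<Rightarrow> ('i \<Rightarrow> 'd) \<Rightarrow> ('r \<Rightarrow> 's) \<Rightarrow> ('d \<Rightarrow> 'r) \<Rightarrow> 'i \<Rightarrow> 's" where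
  "reindex D' e pr f = (\<lambda>i. if i \<in> D' then pr (f (e i)) else undefined)"

lemma reindex_in_Func:
  "e ` D' \<subseteq> D \<Longrightarrow> pr ` R \<subseteq> R' \<Longrightarrow> f \<in> Func D R \<Longrightarrow> reindex D' e pr f \<in> Func D' R'"
  unfolding reindex_def Func_def by auto

lemma reindex_cyl_lift:
  assumes e: "inj_on e D'" "e ` D' \<subseteq> D" and pr: "pr ` R = R'" and f: "f \<in> Func D R"
    and g: "g \<in> cyl D' R' {i\<in>D'. e i \<in> A} (reindex D' e pr f)"
    and B: "B \<subseteq> D'" and A': "A \<union> e ` B \<subseteq> A'"
  shows "\<exists>f'\<in>cyl D R A f. reindex D' e pr ` cyl D R A' f' \<subseteq> cyl D' R' B g"
proof
  define f' where "f' = (\<lambda>x. if x \<in> e ` B - A then inv_into R pr (g (inv_into D' e x)) else f x)"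
  have gF: "g \<in> Func D' R'" using g cyl_subset_Func by blast
  have "f' x \<in> R" if "x \<in> D" for x
  proof (cases "x \<in> e ` B - A")
    case True
    then have "g (inv_into D' e x) \<in> pr ` R"
      using B gF pr inv_into_into[of x e D'] unfolding Func_def by blast
    then show ?thesis using True unfolding f'_def by (simp add: inv_into_into)
  qed (use f that in \<open>auto simp: f'_def Func_def\<close>)
  moreover have "f' x = undefined" if "x \<notin> D" for x
    using that f B e(2) unfolding f'_def Func_def by auto
  ultimately show "f' \<in> cyl D R A f" unfolding cyl_def f'_def Func_def by auto
  show "reindex D' e pr ` cyl D R A' f' \<subseteq> cyl D' R' B g"
  proof
    fix y assume "y \<in> reindex D' e pr ` cyl D R A' f'"
    then obtain h where h: "h \<in> cyl D R A' f'" "y = reindex D' e pr h" by blast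
    have "y i = g i" if i: "i \<in> B" for i
    proof -
      have iD: "i \<in> D'" using i B by blast
      have hi: "h (e i) = f' (e i)" using h(1) i A' unfolding cyl_def by blast
      show ?thesis
      proof (cases "e i \<in> A")
        case True
        then have "g i = reindex D' e pr f i" using g iD unfolding cyl_def by blast
        then show ?thesis using True hi iD h(2) unfolding f'_def reindex_def by simp
      next
        case False
        have "g i \<in> pr ` R" using gF iD pr unfolding Func_def by blast
        then show ?thesis
          using False i hi iD h(2) inv_into_f_f[OF e(1) iD] unfolding f'_def reindex_def
          by (simp add: f_inv_into_f)
      qed
    qed
    moreover have "y \<in> Func D' R'"
      using h cyl_subset_Func reindex_in_Func[OF e(2)] pr by blast
    ultimately show "y \<in> cyl D' R' B g" unfolding cyl_def by blast
  qed
qed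

lemma reindex_open_lift:
  assumes AA: "directed_supports D AA" and BB: "directed_supports D' BB"
    and e: "inj_on e D'" "e ` D' \<subseteq> D" and pr: "pr ` R = R'"
    and image: "\<And>A B. A \<in> AA \<Longrightarrow> B \<in> BB \<Longrightarrow> \<exists>A'\<in>AA. A \<union> e ` B \<subseteq> A'"
    and f: "f \<in> Func D R" and A: "A \<in> AA"
    and V: "openin (supp_top D' R' BB) V" "V \<noteq> {}" "V \<subseteq> cyl D' R' {i\<in>D'. e i \<in> A} (reindex D' e pr f)"
  shows "\<exists>U'. openin (supp_top D R AA) U' \<and> U' \<noteq> {} \<and> U' \<subseteq> cyl D R A f \<and> reindex D' e pr ` U' \<subseteq> V"
proof -
  obtain g where "g \<in> V" using V(2) by blast
  obtain B where B: "B \<in> BB" "cyl D' R' B g \<subseteq> V"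
    using openin_supp_top_cyl_subset[OF BB V(1) \<open>g \<in> V\<close>] by blast
  obtain A' where A': "A' \<in> AA" "A \<union> e ` B \<subseteq> A'" using image[OF A B(1)] by blast
  have "B \<subseteq> D'" using directed_supports_subset[OF BB B(1)] .
  moreover have "g \<in> cyl D' R' {i\<in>D'. e i \<in> A} (reindex D' e pr f)" using V(3) \<open>g \<in> V\<close> by blast
  ultimately obtain f' where f': "f' \<in> cyl D R A f" "reindex D' e pr ` cyl D R A' f' \<subseteq> cyl D' R' B g"
    using reindex_cyl_lift[OF e pr f _ _ A'(2)] by blast
  have "f' \<in> Func D R" using f'(1) cyl_subset_Func by blast
  have "openin (supp_top D R AA) (cyl D R A' f')" by (rule openin_supp_top_cyl[OF AA A'(1) \<open>f' \<in> Func D R\<close>])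
  moreover have "cyl D R A' f' \<noteq> {}" using in_cyl_self[OF \<open>f' \<in> Func D R\<close>] by blast
  moreover have "cyl D R A' f' \<subseteq> cyl D R A f" using cyl_antimono[OF _ f'(1), of A'] A'(2) by blast
  moreover have "reindex D' e pr ` cyl D R A' f' \<subseteq> V" using f'(2) B(2) by blast
  ultimately show ?thesis by blast
qed

lemma non_le_non_reindex:
  assumes AA: "directed_supports D AA" and BB: "directed_supports D' BB"
    and e: "inj_on e D'" "e ` D' \<subseteq> D" and pr: "pr ` R = R'"
    and preimage: "\<And>A. A \<in> AA \<Longrightarrow> {i\<in>D'. e i \<in> A} \<in> BB"
    and image: "\<And>A B. A \<in> AA \<Longrightarrow> B \<in> BB \<Longrightarrow> \<exists>A'\<in>AA. A \<union> e ` B \<subseteq> A'"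
  shows "non_le_non kappa (supp_top D' R' BB) (supp_top D R AA)"
proof (rule non_le_non_if_nowhere_dense_preimage[where \<phi> = "reindex D' e pr"])
  show "reindex D' e pr ` topspace (supp_top D R AA) \<subseteq> topspace (supp_top D' R' BB)"
    unfolding topspace_supp_top[OF AA] topspace_supp_top[OF BB] using reindex_in_Func[OF e(2)] pr
    by blast
next
  fix N assume "nowhere_densein (supp_top D' R' BB) N"
  then show "nowhere_densein (supp_top D R AA) {x\<in>topspace (supp_top D R AA). reindex D' e pr x \<in> N}"
  proof (rule nowhere_densein_preimage[rotated])
    fix U assume U: "openin (supp_top D R AA) U" "U \<noteq> {}"
    then obtain f where "f \<in> U" by blast
    then have f: "f \<in> Func D R" using openin_subset[OF U(1)] topspace_supp_top[OF AA] by blast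
    obtain A where A: "A \<in> AA" "cyl D R A f \<subseteq> U"
      using openin_supp_top_cyl_subset[OF AA U(1) \<open>f \<in> U\<close>] by blast
    let ?W = "cyl D' R' {i\<in>D'. e i \<in> A} (reindex D' e pr f)"
    have fW: "reindex D' e pr f \<in> Func D' R'" using reindex_in_Func[OF e(2) _ f] pr by blast
    have "\<exists>U'. openin (supp_top D R AA) U' \<and> U' \<noteq> {} \<and> U' \<subseteq> U \<and> reindex D' e pr ` U' \<subseteq> V"
      if "openin (supp_top D' R' BB) V" "V \<noteq> {}" "V \<subseteq> ?W" for V
      using reindex_open_lift[OF AA BB e pr image f A(1) that] A(2) by blast
    then show "\<exists>W. openin (supp_top D' R' BB) W \<and> W \<noteq> {} \<and> (\<forall>V. openin (supp_top D' R' BB) V \<and>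
      V \<noteq> {} \<and> V \<subseteq> W \<longrightarrow> (\<exists>U'. openin (supp_top D R AA) U' \<and> U' \<noteq> {} \<and> U' \<subseteq> U \<and>
      reindex D' e pr ` U' \<subseteq> V))"
      using openin_supp_top_cyl[OF BB preimage[OF A(1)] fW] in_cyl_self[OF fW]
      by (intro exI[of _ ?W]) blast
  qed
qed

lemma non_le_non_box_top_range:
  assumes lam: "Card_order lam" "infinite (Field lam)" and "R' \<noteq> {}" "|R'| \<le>o |R|"
  shows "non_le_non kappa (box_top D R' lam) (box_top D R lam)"
proof -
  let ?AA = "{A. A \<subseteq> D \<and> |A| <o lam}"
  have AA: "directed_supports D ?AA" by (rule directed_supports_small[OF lam])
  obtain pr where pr: "pr ` R = R'" using card_of_ordLeq2[OF assms(3), THEN iffD2, OF assms(4)] by blast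
  have "{i\<in>D. id i \<in> A} \<in> ?AA" if "A \<in> ?AA" for A
  proof -
    have "{i\<in>D. id i \<in> A} = A" using that by auto
    then show ?thesis using that by simp
  qed
  moreover have "\<exists>A'\<in>?AA. A \<union> id ` B \<subseteq> A'" if "A \<in> ?AA" "B \<in> ?AA" for A B
    using directed_supportsD[OF AA that] by auto
  moreover have "id ` D \<subseteq> D" by simp
  ultimately show ?thesis
    unfolding box_top_eq_supp_top by (intro non_le_non_reindex[OF AA AA inj_on_id _ pr])
qed

lemma non_le_non_box_top_restrict:
  assumes lam: "Card_order lam" "infinite (Field lam)" and "|D'| \<le>o |D|"
  shows "non_le_non kappa (box_top D' R lam) (box_top D R lam)"
proof -
  let ?AA = "{A. A \<subseteq> D \<and> |A| <o lam}" and ?BB = "{B. B \<subseteq> D' \<and> |B| <o lam}"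
  obtain e where e: "inj_on e D'" "e ` D' \<subseteq> D"
    using card_of_ordLeq[THEN iffD2, OF assms(3)] by blast
  have "{i\<in>D'. e i \<in> A} \<in> ?BB" if "A \<in> ?AA" for A
  proof -
    have "|{i\<in>D'. e i \<in> A}| \<le>o |A|"
      using card_of_ordLeq[THEN iffD1] inj_on_subset[OF e(1)] by (metis (no_types, lifting) image_subsetI mem_Collect_eq subsetI)
    then show ?thesis using that ordLeq_ordLess_trans by blast
  qed
  moreover have "\<exists>A'\<in>?AA. A \<union> e ` B \<subseteq> A'" if "A \<in> ?AA" "B \<in> ?BB" for A B
  proof -
    have "|e ` B| <o lam" using that(2) card_of_image ordLeq_ordLess_trans by blast
    then have "|A \<union> e ` B| <o lam" using card_of_Un_ordLess_infinite_Field[OF lam(2,1)] that(1) by blast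
    then show ?thesis using that e(2) by blast
  qed
  ultimately show ?thesis
    unfolding box_top_eq_supp_top
    by (intro non_le_non_reindex[OF directed_supports_small[OF lam] directed_supports_small[OF lam] e image_ident])
qed

section \<open>Lower bounds for non(M_kappa)\<close>

lemma nowhere_densein_if_card_ordLess_Func:
  fixes R :: "'r set"
  assumes AA: "directed_supports D AA" and Y: "Y \<subseteq> Func D R" "|Y| <o |Func A R|"
    and fresh: "\<And>A0. A0 \<in> AA \<Longrightarrow> \<exists>A1\<in>AA. \<exists>e. A0 \<subseteq> A1 \<and> inj_on e A \<and> e ` A \<subseteq> A1 - A0"
  shows "nowhere_densein (supp_top D R AA) Y"
proof (rule nowhere_densein_supp_topI[OF AA Y(1)])
  fix f A0 assume f: "f \<in> Func D R" and "A0 \<in> AA"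
  then obtain A1 e where A1: "A1 \<in> AA" "A0 \<subseteq> A1" "inj_on e A" "e ` A \<subseteq> A1 - A0"
    using fresh by blast
  have "A1 \<subseteq> D" by (rule directed_supports_subset[OF AA A1(1)])
  define read where "read = (\<lambda>g a. if a \<in> A then g (e a) else (undefined :: 'r))"
  have "\<not> Func A R \<subseteq> read ` Y"
    using card_of_mono1 card_of_image[of read Y] Y(2) not_ordLess_ordLeq ordLeq_ordLess_trans by blast
  then obtain h where h: "h \<in> Func A R" "h \<notin> read ` Y" by blast
  define f' where "f' = (\<lambda>x. if x \<in> e ` A then h (inv_into A e x) else f x)"
  have "f' \<in> Func D R"
    using f h(1) A1(4) \<open>A1 \<subseteq> D\<close> inv_into_into[of _ e A] unfolding f'_def Func_def by auto
  then have "f' \<in> cyl D R A0 f" using A1(4) unfolding cyl_def f'_def by auto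
  moreover have "cyl D R A1 f' \<inter> Y = {}"
  proof -
    have "read g = h" if "g \<in> cyl D R A1 f'" for g
    proof
      fix a
      show "read g a = h a"
        using that A1(3,4) h(1) unfolding read_def cyl_def f'_def Func_def by auto
    qed
    then show ?thesis using h(2) by blast
  qed
  ultimately show "\<exists>f'\<in>cyl D R A0 f. \<exists>A'\<in>AA. A0 \<subseteq> A' \<and> cyl D R A' f' \<inter> Y = {}"
    using A1(1,2) by blast
qed

lemma pow_less_le_non_supp_top:
  assumes AA: "directed_supports D AA" and kappa: "Card_order kappa" "Field kappa \<noteq> {}"
    and fresh: "\<And>A A0. A \<subseteq> Field lam \<Longrightarrow> |A| <o lam \<Longrightarrow> A0 \<in> AA \<Longrightarrow>
      \<exists>A1\<in>AA. \<exists>e. A0 \<subseteq> A1 \<and> inj_on e A \<and> e ` A \<subseteq> A1 - A0"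
  shows "pow_less_le_non R lam kappa (supp_top D R AA)"
  unfolding pow_less_le_non_def pow_less_le_def
proof (intro allI impI)
  fix Y A assume Y: "Y \<subseteq> topspace (supp_top D R AA) \<and> \<not> kmeagre kappa (supp_top D R AA) Y"
    and A: "A \<subseteq> Field lam \<and> |A| <o lam"
  show "|Func A R| \<le>o |Y|"
  proof (rule ccontr)
    assume "\<not> |Func A R| \<le>o |Y|"
    then have "|Y| <o |Func A R|" using ordLess_or_ordLeq[OF card_of_Well_order card_of_Well_order] by blast
    moreover have "Y \<subseteq> Func D R" using Y topspace_supp_top[OF AA] by blast
    ultimately have "nowhere_densein (supp_top D R AA) Y"
      using nowhere_densein_if_card_ordLess_Func[OF AA _ _ fresh[of A]] A by blast
    moreover have "|{Y}| \<le>o kappa"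
      using ordLeq_ordIso_trans[OF card_of_singl_ordLeq[OF kappa(2)] card_of_Field_ordIso[OF kappa(1)]] .
    ultimately have "kmeagre kappa (supp_top D R AA) Y" unfolding kmeagre_def using Y by blast
    then show False using Y by blast
  qed
qed

lemma small_supports_fresh_copy:
  fixes lam :: "'l rel" and D :: "'d set"
  assumes lam: "Card_order lam" "infinite (Field lam)" and D: "|D| =o lam"
    and A: "|A| <o lam" and A0: "A0 \<subseteq> D" "|A0| <o lam"
  shows "\<exists>A1\<in>{A. A \<subseteq> D \<and> |A| <o lam}. \<exists>e. A0 \<subseteq> A1 \<and> inj_on e A \<and> e ` A \<subseteq> A1 - A0"
proof -
  have "infinite D" using lam(2) card_of_ordIso_finite_Field[OF lam(1) ordIso_symmetric[OF D]] by blast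
  moreover have "|A0| <o |D|" using ordLess_ordIso_trans[OF A0(2) ordIso_symmetric[OF D]] .
  ultimately have "|D| \<le>o |D - A0|" by (rule card_of_ordLeq_Diff)
  moreover have "|A| \<le>o |D|" using ordLess_imp_ordLeq[OF ordLess_ordIso_trans[OF A ordIso_symmetric[OF D]]] .
  ultimately have "|A| \<le>o |D - A0|" using ordLeq_transitive by blast
  then obtain e where e: "inj_on e A" "e ` A \<subseteq> D - A0"
    using card_of_ordLeq[THEN iffD2] by blast
  have "|e ` A| <o lam" using ordLeq_ordLess_trans[OF card_of_image A] .
  then have "|A0 \<union> e ` A| <o lam" using card_of_Un_ordLess_infinite_Field[OF lam(2,1) A0(2)] by blast
  then show ?thesis using e A0(1) by (intro bexI[of _ "A0 \<union> e ` A"]) auto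
qed

lemma pow_less_le_non_box_top:
  fixes lam :: "'l rel" and D :: "'d set"
  assumes lam: "Card_order lam" "infinite (Field lam)" and "|D| =o lam"
    and kappa: "Card_order kappa" "Field kappa \<noteq> {}"
  shows "pow_less_le_non R lam kappa (box_top D R lam)"
  unfolding box_top_eq_supp_top
proof (rule pow_less_le_non_supp_top[OF directed_supports_small[OF lam] kappa])
  fix A A0 assume "|A| <o lam" "A0 \<in> {A. A \<subseteq> D \<and> |A| <o lam}"
  then show "\<exists>A1\<in>{A. A \<subseteq> D \<and> |A| <o lam}. \<exists>e. A0 \<subseteq> A1 \<and> inj_on e A \<and> e ` A \<subseteq> A1 - A0"
    using small_supports_fresh_copy[OF lam assms(3)] by blast
qed

lemma cf_bracket_le_non_if_nowhere_dense_misses: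
  assumes C: "\<And>f. f \<in> topspace T \<Longrightarrow> C f \<subseteq> Field mu \<and> |C f| \<le>o kappa"
    and misses: "\<And>b. b \<in> Field mu \<Longrightarrow> nowhere_densein T {f\<in>topspace T. b \<notin> C f}"
  shows "cf_bracket_le_non mu kappa T"
  unfolding cf_bracket_le_non_def cf_bracket_le_def
proof (intro allI impI exI[of _ "C ` Y" for Y] conjI)
  fix Y assume Y: "Y \<subseteq> topspace T \<and> \<not> kmeagre kappa T Y"
  show "C ` Y \<subseteq> {B. B \<subseteq> Field mu \<and> |B| \<le>o kappa}" using C Y by blast
  show "|C ` Y| \<le>o |Y|" by (rule card_of_image)
  fix B assume B: "B \<subseteq> Field mu \<and> |B| \<le>o kappa"
  show "\<exists>C'\<in>C ` Y. B \<subseteq> C'"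
  proof (rule ccontr)
    let ?NN = "(\<lambda>b. {f\<in>topspace T. b \<notin> C f}) ` B"
    assume "\<not> (\<exists>C'\<in>C ` Y. B \<subseteq> C')"
    then have "Y \<subseteq> \<Union>?NN" using Y by blast
    moreover have "|?NN| \<le>o kappa" using ordLeq_transitive[OF card_of_image] B by blast
    moreover have "\<forall>N\<in>?NN. nowhere_densein T N" using misses B by blast
    ultimately have "kmeagre kappa T Y" unfolding kmeagre_def using Y by blast
    then show False using Y by blast
  qed
qed

lemma cf_bracket_le_non_box_top:
  fixes kappa :: "'k rel" and D :: "'d set"
  assumes kappa: "Card_order kappa" "infinite (Field kappa)" and D: "|D| =o kappa"
  shows "cf_bracket_le_non mu kappa (box_top D (Field mu) kappa)"
proof (rule cf_bracket_le_non_if_nowhere_dense_misses[where C = "\<lambda>f. f ` D"])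
  let ?AA = "{A. A \<subseteq> D \<and> |A| <o kappa}"
  have AA: "directed_supports D ?AA" by (rule directed_supports_small[OF kappa])
  have top: "topspace (box_top D (Field mu) kappa) = Func D (Field mu)"
    unfolding box_top_eq_supp_top by (rule topspace_supp_top[OF AA])
  show "f ` D \<subseteq> Field mu \<and> |f ` D| \<le>o kappa" if "f \<in> topspace (box_top D (Field mu) kappa)" for f
    using that ordLeq_ordIso_trans[OF card_of_image D] unfolding top Func_def by blast
  fix b assume b: "b \<in> Field mu"
  show "nowhere_densein (box_top D (Field mu) kappa) {f\<in>topspace (box_top D (Field mu) kappa). b \<notin> f ` D}"
    unfolding top unfolding box_top_eq_supp_top
  proof (rule nowhere_densein_supp_topI[OF AA])
    fix f A assume f: "f \<in> Func D (Field mu)" and A: "A \<in> ?AA"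
    have "|A| <o kappa" using A by simp
    then have "|A| <o |D|" using ordLess_ordIso_trans[OF _ ordIso_symmetric[OF D]] by blast
    then have "\<not> D \<subseteq> A" by (metis card_of_mono1 not_ordLess_ordLeq)
    then obtain x where x: "x \<in> D" "x \<notin> A" by blast
    have "f(x := b) \<in> Func D (Field mu)" using f x(1) b unfolding Func_def by auto
    then have f': "f(x := b) \<in> cyl D (Field mu) A f" using x(2) unfolding cyl_def by auto
    have A': "insert x A \<in> ?AA"
    proof -
      have "|{x}| <o kappa" by (rule card_of_finite_ordLess[OF kappa]) simp
      moreover have "|A| <o kappa" using A by simp
      ultimately have "|{x} \<union> A| <o kappa" by (rule card_of_Un_ordLess_infinite_Field[OF kappa(2,1)])
      then show ?thesis using A x(1) by simp
    qed
    have "b \<in> g ` D" if "g \<in> cyl D (Field mu) (insert x A) (f(x := b))" for g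
      using that x(1) unfolding cyl_def by force
    then have "cyl D (Field mu) (insert x A) (f(x := b)) \<inter> {f \<in> Func D (Field mu). b \<notin> f ` D} = {}"
      by blast
    then show "\<exists>f'\<in>cyl D (Field mu) A f. \<exists>A'\<in>?AA. A \<subseteq> A' \<and>
        cyl D (Field mu) A' f' \<inter> {f \<in> Func D (Field mu). b \<notin> f ` D} = {}"
      using f' A' by (intro bexI[of _ "f(x := b)"] bexI[of _ "insert x A"] conjI subset_insertI)
  qed auto
qed

section \<open>Singular cardinals of cofinality kappa\<close>

locale singular_cofinality =
  fixes kappa :: "'k rel" and mu :: "'m rel"
  assumes kappa_card: "Card_order kappa" and kappa_inf: "infinite (Field kappa)"
    and mu_card: "Card_order mu" and mu_singular: "\<not> regularCard mu"
    and cof: "cofinality_is mu kappa"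
begin

lemma mu_wo: "Well_order mu"
  using mu_card by (rule card_order_on_well_order_on)

lemma mu_total: "a \<in> Field mu \<Longrightarrow> b \<in> Field mu \<Longrightarrow> (a, b) \<in> mu \<or> (b, a) \<in> mu"
  using wo_rel.TOTALS[of mu] mu_wo by (simp add: wo_rel_def)

lemma mu_wo_rel: "wo_rel mu"
  using mu_card by (rule Card_order_wo_rel)

lemma kappa_wo_rel: "wo_rel kappa"
  using kappa_card by (rule Card_order_wo_rel)

lemma underS_mono: "(a, b) \<in> mu \<Longrightarrow> x \<in> underS mu a \<Longrightarrow> x \<in> underS mu b"
  using underS_incr[OF wo_rel.TRANS[OF mu_wo_rel] wo_rel.ANTISYM[OF mu_wo_rel]] by blast

definition cof_set :: "'m set" where
  "cof_set = (SOME K0. K0 \<subseteq> Field mu \<and> cofinal K0 mu \<and> |K0| =o kappa)"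

lemma cof_set: "cof_set \<subseteq> Field mu" "cofinal cof_set mu" "|cof_set| =o kappa"
proof -
  have "\<exists>K0. K0 \<subseteq> Field mu \<and> cofinal K0 mu \<and> |K0| =o kappa"
    using cof unfolding cofinality_is_def by blast
  then show "cof_set \<subseteq> Field mu" "cofinal cof_set mu" "|cof_set| =o kappa"
    unfolding cof_set_def by (metis (mono_tags, lifting) someI_ex)+
qed

lemma cofinal_card: "B \<subseteq> Field mu \<Longrightarrow> cofinal B mu \<Longrightarrow> kappa \<le>o |B|"
  using cof unfolding cofinality_is_def by blast

lemma card_Field_kappa_le_mu: "|Field kappa| \<le>o |Field mu|"
  using ordIso_ordLeq_trans[OF ordIso_transitive[OF card_of_Field_ordIso[OF kappa_card]
      ordIso_symmetric[OF cof_set(3)]] card_of_mono1[OF cof_set(1)]] .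

lemma infinite_cof_set: "infinite cof_set"
  using kappa_inf card_of_ordIso_finite_Field[OF kappa_card ordIso_symmetric[OF cof_set(3)]] by blast

lemma infinite_Field_mu: "infinite (Field mu)"
  using kappa_inf card_Field_kappa_le_mu card_of_ordLeq_finite by blast

lemma Field_mu_nonempty: "Field mu \<noteq> {}"
  using infinite_Field_mu by auto

lemma kappa_ordLess_mu: "kappa <o mu"
proof -
  have "kappa \<le>o mu"
    using ordIso_ordLeq_trans[OF ordIso_symmetric[OF cof_set(3)]
        ordLeq_ordIso_trans[OF card_of_mono1[OF cof_set(1)] card_of_Field_ordIso[OF mu_card]]] .
  moreover have "\<not> kappa =o mu"
  proof
    assume "kappa =o mu"
    have "|L| =o mu" if "L \<subseteq> Field mu" "cofinal L mu" for L
    proof -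
      have "mu \<le>o |L|" using ordIso_ordLeq_trans[OF ordIso_symmetric[OF \<open>kappa =o mu\<close>] cofinal_card[OF that]] .
      moreover have "|L| \<le>o mu"
        using ordLeq_ordIso_trans[OF card_of_mono1[OF that(1)] card_of_Field_ordIso[OF mu_card]] .
      ultimately show ?thesis by (simp add: ordIso_iff_ordLeq)
    qed
    then show False using mu_singular unfolding regularCard_def by blast
  qed
  ultimately show ?thesis using ordLeq_iff_ordLess_or_ordIso by blast
qed

lemma bounded_if_card_ordLess_kappa:
  assumes B: "B \<subseteq> Field mu" "|B| <o kappa"
  shows "\<exists>b\<in>Field mu. B \<subseteq> underS mu b"
proof -
  have "\<not> cofinal B mu" using cofinal_card[OF B(1)] B(2) not_ordLess_ordLeq by blast
  then obtain a where a: "a \<in> Field mu" "\<forall>x\<in>B. \<not> (a \<noteq> x \<and> (a, x) \<in> mu)"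
    unfolding cofinal_def by blast
  obtain b where b: "b \<in> Field mu" "a \<noteq> b" "(a, b) \<in> mu"
    using a(1) cof_set(1,2) unfolding cofinal_def by blast
  have "x \<in> underS mu a \<union> {a}" if "x \<in> B" for x
  proof -
    have "x \<in> Field mu" using that B(1) by blast
    show ?thesis using mu_total[OF \<open>x \<in> Field mu\<close> a(1)] a(2) that unfolding underS_def by auto
  qed
  moreover have "a \<in> underS mu b" using b unfolding underS_def by blast
  ultimately show ?thesis using b(1,3) underS_mono by blast
qed

(* cardSuc of a set smaller than mu is regular, hence strictly below the singular mu and
   isomorphic to a proper initial segment of mu. *)
lemma exists_large_underS:
  fixes X :: "'m set"
  assumes X: "|X| <o mu"
  shows "\<exists>a\<in>Field mu. |X| <o |underS mu a| \<and> infinite (underS mu a)"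
proof -
  let ?Y = "X \<union> cof_set"
  let ?s = "cardSuc |?Y|"
  have Y: "|?Y| <o mu"
    using card_of_Un_ordLess_infinite_Field[OF infinite_Field_mu mu_card X
        ordIso_ordLess_trans[OF cof_set(3) kappa_ordLess_mu]] .
  have s: "Card_order ?s" by (rule cardSuc_Card_order[OF card_of_Card_order])
  have "?s \<le>o mu" using cardSuc_least[OF card_of_Card_order mu_card Y] .
  moreover have "\<not> ?s =o mu"
  proof
    assume "?s =o mu"
    moreover have "infinite ?Y" using infinite_cof_set by blast
    then have Y_inf: "Cinfinite |?Y|" by (simp add: cinfinite_def Field_card_of card_of_card_order_on)
    then have "Cinfinite ?s" by (rule Cinfinite_cardSuc)
    moreover have "regularCard ?s" using infinite_cardSuc_regularCard Y_inf unfolding cinfinite_def by blast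
    ultimately show False using regularCard_ordIso mu_singular by blast
  qed
  ultimately have "?s <o mu" using ordLeq_iff_ordLess_or_ordIso by blast
  then obtain a where a: "a \<in> Field mu" "?s =o Restr mu (underS mu a)"
    using ordLess_iff_ordIso_Restr[OF mu_wo card_order_on_well_order_on[OF s]] by blast
  have "|Field ?s| =o |underS mu a|"
    using card_of_cong[OF a(2)] Field_Restr_ofilter[OF mu_wo wo_rel.underS_ofilter[OF mu_wo_rel]] by simp
  then have "|?Y| <o |underS mu a|"
    using ordLess_ordIso_trans[OF cardSuc_greater[OF card_of_Card_order]
        ordIso_transitive[OF ordIso_symmetric[OF card_of_Field_ordIso[OF s]]]] by blast
  then have "|X| <o |underS mu a|" "|cof_set| <o |underS mu a|"
    using ordLeq_ordLess_trans[OF card_of_mono1] by blast+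
  then show ?thesis using a(1) infinite_cof_set card_of_ordLeq_finite ordLess_imp_ordLeq by blast
qed

(* Recursion along kappa: each stage exists because subsets of mu of size < kappa are bounded. *)
lemma increasing_sequence_above:
  assumes e: "e ` Field kappa \<subseteq> Field mu"
  shows "\<exists>c. \<forall>i\<in>Field kappa. c i \<in> Field mu \<and> e i \<in> underS mu (c i) \<and>
    (\<forall>j\<in>underS kappa i. c j \<in> underS mu (c i))"
proof -
  define P where "P g i x \<longleftrightarrow> x \<in> Field mu \<and> e i \<in> underS mu x \<and>
    (\<forall>j\<in>underS kappa i. g j \<in> Field mu \<longrightarrow> g j \<in> underS mu x)" for g :: "'k \<Rightarrow> 'm" and i x
  define H where "H g i = Eps (P g i)" for g i
  define c where "c = wo_rel.worec kappa H"
  have "H g i = H g' i" if "\<forall>j\<in>underS kappa i. g j = g' j" for g g' i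
  proof -
    have "P g i = P g' i" unfolding P_def using that by (intro ext) auto
    then show ?thesis unfolding H_def by simp
  qed
  then have "wo_rel.adm_wo kappa H" unfolding wo_rel.adm_wo_def[OF kappa_wo_rel] by blast
  then have c_eq: "c = H c" unfolding c_def by (rule wo_rel.worec_fixpoint[OF kappa_wo_rel])
  have P_c: "P c i (c i)" if i: "i \<in> Field kappa" for i
  proof -
    let ?C = "{c j | j. j \<in> underS kappa i \<and> c j \<in> Field mu}"
    have "?C \<subseteq> c ` underS kappa i" by blast
    then have "|?C| \<le>o |underS kappa i|" by (rule ordLeq_transitive[OF card_of_mono1 card_of_image])
    then have "|?C| <o kappa" by (rule ordLeq_ordLess_trans[OF _ card_of_underS[OF kappa_card i]])
    then have "|?C \<union> {e i}| <o kappa"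
      by (rule card_of_Un_ordLess_infinite_Field[OF kappa_inf kappa_card _ card_of_finite_ordLess[OF kappa_card kappa_inf]]) simp
    moreover have "?C \<union> {e i} \<subseteq> Field mu" using e i by blast
    ultimately obtain b where "b \<in> Field mu" "?C \<union> {e i} \<subseteq> underS mu b"
      using bounded_if_card_ordLess_kappa by blast
    then have "P c i b" unfolding P_def by blast
    then have "P c i (Eps (P c i))" by (rule someI)
    then show ?thesis using fun_cong[OF c_eq, of i] unfolding H_def by simp
  qed
  have "c i \<in> Field mu" if "i \<in> Field kappa" for i
    using P_c[OF that] unfolding P_def by blast
  moreover have "j \<in> Field kappa" if "j \<in> underS kappa i" for i j
    using that underS_Field by fast
  ultimately show ?thesis using P_c unfolding P_def by blast
qed

lemma card_preimage_underS_ordLess: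
  assumes c: "\<And>i. i \<in> Field kappa \<Longrightarrow> c i \<in> Field mu \<and> e i \<in> underS mu (c i)"
    and increasing: "\<And>i j. i \<in> Field kappa \<Longrightarrow> j \<in> Field kappa \<Longrightarrow> (j, i) \<in> kappa \<Longrightarrow> j \<noteq> i \<Longrightarrow>
      (c j, c i) \<in> mu \<and> c j \<noteq> c i"
    and e: "cof_set \<subseteq> e ` Field kappa" and a: "a \<in> Field mu"
  shows "|{i\<in>Field kappa. c i \<in> underS mu a}| <o kappa"
proof -
  obtain k where k: "k \<in> cof_set" "a \<noteq> k" "(a, k) \<in> mu"
    using cof_set(2) a unfolding cofinal_def by blast
  obtain i0 where i0: "i0 \<in> Field kappa" "e i0 = k" using e k(1) by blast
  have "i \<in> underS kappa i0" if i: "i \<in> Field kappa" "c i \<in> underS mu a" for i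
  proof (rule ccontr)
    assume "i \<notin> underS kappa i0"
    then have "(i0, i) \<in> kappa"
      using wo_rel.TOTALS[OF kappa_wo_rel] i(1) i0(1) unfolding underS_def by blast
    have "(c i0, c i) \<in> mu"
    proof (cases "i0 = i")
      case True
      then show ?thesis using wo_rel.REFL[OF mu_wo_rel] c[OF i(1)] unfolding refl_on_def by blast
    next
      case False
      then show ?thesis using increasing[OF i(1) i0(1) \<open>(i0, i) \<in> kappa\<close>] by blast
    qed
    moreover have "(k, c i0) \<in> mu" using c[OF i0(1)] i0(2) unfolding underS_def by blast
    moreover have "(c i, a) \<in> mu" using i(2) unfolding underS_def by blast
    ultimately have "(k, a) \<in> mu" using wo_rel.TRANS[OF mu_wo_rel] unfolding trans_def by meson
    then show False using k(2,3) wo_rel.ANTISYM[OF mu_wo_rel] unfolding antisym_def by blast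
  qed
  then have "|{i\<in>Field kappa. c i \<in> underS mu a}| \<le>o |underS kappa i0|" by (intro card_of_mono1 subsetI) simp
  then show ?thesis using card_of_underS[OF kappa_card i0(1)] by (rule ordLeq_ordLess_trans)
qed

lemma cofinal_sequence:
  "\<exists>c. inj_on c (Field kappa) \<and> c ` Field kappa \<subseteq> Field mu \<and>
     (\<forall>a\<in>Field mu. |{i\<in>Field kappa. c i \<in> underS mu a}| <o kappa)"
proof -
  have "|Field kappa| =o |cof_set|"
    using ordIso_transitive[OF card_of_Field_ordIso[OF kappa_card] ordIso_symmetric[OF cof_set(3)]] .
  then obtain e where e: "bij_betw e (Field kappa) cof_set" using card_of_ordIso[THEN iffD2] by blast
  then have "e ` Field kappa \<subseteq> Field mu" using cof_set(1) by (simp add: bij_betw_def)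
  from increasing_sequence_above[OF this] obtain c where c: "\<And>i. i \<in> Field kappa \<Longrightarrow>
      c i \<in> Field mu \<and> e i \<in> underS mu (c i) \<and> (\<forall>j\<in>underS kappa i. c j \<in> underS mu (c i))"
    by blast
  have kappa_total: "(i, j) \<in> kappa \<or> (j, i) \<in> kappa" if "i \<in> Field kappa" "j \<in> Field kappa" for i j
    using wo_rel.TOTALS[OF kappa_wo_rel] that by blast
  have increasing: "(c j, c i) \<in> mu \<and> c j \<noteq> c i"
    if "i \<in> Field kappa" "j \<in> Field kappa" "(j, i) \<in> kappa" "j \<noteq> i" for i j
    using c[OF that(1)] that(3,4) unfolding underS_def by blast
  have "inj_on c (Field kappa)"
  proof (rule inj_onI, rule ccontr)
    fix i j assume ij: "i \<in> Field kappa" "j \<in> Field kappa" "c i = c j" "i \<noteq> j"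
    show False using kappa_total[OF ij(1,2)] increasing[OF ij(1,2)] increasing[OF ij(2,1)] ij(3,4) by auto
  qed
  moreover have "|{i\<in>Field kappa. c i \<in> underS mu a}| <o kappa" if "a \<in> Field mu" for a
  proof (rule card_preimage_underS_ordLess[OF _ increasing _ that])
    show "cof_set \<subseteq> e ` Field kappa" using e by (simp add: bij_betw_def)
  qed (use c in blast)
  ultimately show ?thesis using c by blast
qed

lemma pow_less_le_non_bd_top: "pow_less_le_non R mu kappa (bd_top mu R)"
  unfolding bd_top_eq_supp_top
proof (rule pow_less_le_non_supp_top[OF directed_supports_underS[OF mu_wo Field_mu_nonempty] kappa_card])
  show "Field kappa \<noteq> {}" using kappa_inf by auto
  fix A A0 assume A: "A \<subseteq> Field mu" "|A| <o mu" and "A0 \<in> {underS mu a | a. a \<in> Field mu}"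
  then obtain a0 where a0: "a0 \<in> Field mu" "A0 = underS mu a0" by blast
  have "|A \<union> underS mu a0| <o mu"
    using card_of_Un_ordLess_infinite_Field[OF infinite_Field_mu mu_card A(2) card_of_underS[OF mu_card a0(1)]] .
  then obtain a where a: "a \<in> Field mu" "|A \<union> underS mu a0| <o |underS mu a|" "infinite (underS mu a)"
    using exists_large_underS by blast
  have "|A| <o |underS mu a|" "|underS mu a0| <o |underS mu a|"
    using ordLeq_ordLess_trans[OF card_of_mono1 a(2)] by blast+
  then have sub: "underS mu a0 \<subseteq> underS mu a" and "|A| \<le>o |underS mu a - underS mu a0|"
    using underS_subset_if_card_ordLess[OF mu_wo a0(1) a(1)] card_of_ordLeq_Diff[OF a(3)]
      ordLeq_transitive[OF ordLess_imp_ordLeq] by blast+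
  then obtain e where "inj_on e A" "e ` A \<subseteq> underS mu a - underS mu a0"
    using card_of_ordLeq[THEN iffD2] by blast
  then show "\<exists>A1\<in>{underS mu a | a. a \<in> Field mu}. \<exists>e. A0 \<subseteq> A1 \<and> inj_on e A \<and> e ` A \<subseteq> A1 - A0"
    using a(1) a0(2) sub by blast
qed

lemma non_le_non_box_bd_top: "non_le_non kappa (box_top (Field kappa) R kappa) (bd_top mu R)"
proof -
  let ?AA = "{underS mu a | a. a \<in> Field mu}" and ?BB = "{B. B \<subseteq> Field kappa \<and> |B| <o kappa}"
  obtain c where c: "inj_on c (Field kappa)" "c ` Field kappa \<subseteq> Field mu"
    "\<And>a. a \<in> Field mu \<Longrightarrow> |{i\<in>Field kappa. c i \<in> underS mu a}| <o kappa"
    using cofinal_sequence by blast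
  have "{i\<in>Field kappa. c i \<in> A} \<in> ?BB" if A: "A \<in> ?AA" for A
  proof -
    obtain a where "a \<in> Field mu" "A = underS mu a" using A by blast
    then show ?thesis using c(3) by simp
  qed
  moreover have "\<exists>A'\<in>?AA. A \<union> c ` B \<subseteq> A'" if A: "A \<in> ?AA" and B: "B \<in> ?BB" for A B
  proof -
    obtain a where a: "a \<in> Field mu" "A = underS mu a" using A by blast
    have "|c ` B| <o kappa" using B ordLeq_ordLess_trans[OF card_of_image] by blast
    moreover have "c ` B \<subseteq> Field mu" using B c(2) by blast
    ultimately obtain b where b: "b \<in> Field mu" "c ` B \<subseteq> underS mu b"
      using bounded_if_card_ordLess_kappa by blast
    have "underS mu a \<in> ?AA" "underS mu b \<in> ?AA" using a(1) b(1) by blast+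
    then obtain A' where "A' \<in> ?AA" "underS mu a \<subseteq> A'" "underS mu b \<subseteq> A'"
      using directed_supportsD[OF directed_supports_underS[OF mu_wo Field_mu_nonempty]] by meson
    then show ?thesis using a(2) b(2) by blast
  qed
  ultimately show ?thesis
    unfolding box_top_eq_supp_top bd_top_eq_supp_top
    by (intro non_le_non_reindex[OF directed_supports_underS[OF mu_wo Field_mu_nonempty]
          directed_supports_small[OF kappa_card kappa_inf] c(1,2) image_ident])
qed

subsection \<open>Coding subsets of mu of size kappa by binary functions\<close>

(* tcode (k, c, x) is the entry in column c below the cofinal point k and row x. *)
definition tcode :: "'m \<times> 'm \<times> 'm \<Rightarrow> 'm" where
  "tcode = (SOME q. inj_on q (Field mu \<times> Field mu \<times> Field mu) \<and>
     q ` (Field mu \<times> Field mu \<times> Field mu) \<subseteq> Field mu)"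

lemma tcode: "inj_on tcode (Field mu \<times> Field mu \<times> Field mu)"
  "tcode ` (Field mu \<times> Field mu \<times> Field mu) \<subseteq> Field mu"
proof -
  have "|Field mu \<times> Field mu| =o |Field mu|" by (rule card_of_Times_same_infinite[OF infinite_Field_mu])
  then have "|Field mu \<times> Field mu \<times> Field mu| \<le>o |Field mu|"
    using ordLeq_ordIso_trans[OF card_of_Times_mono2[OF ordIso_imp_ordLeq]] by blast
  then have "\<exists>q. inj_on q (Field mu \<times> Field mu \<times> Field mu) \<and> q ` (Field mu \<times> Field mu \<times> Field mu) \<subseteq> Field mu"
    by (rule card_of_ordLeq[THEN iffD2])
  then show "inj_on tcode (Field mu \<times> Field mu \<times> Field mu)"
    "tcode ` (Field mu \<times> Field mu \<times> Field mu) \<subseteq> Field mu"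
    unfolding tcode_def by (metis (mono_tags, lifting) someI_ex)+
qed

definition codes_at :: "('m \<Rightarrow> bool) \<Rightarrow> 'm \<Rightarrow> 'm \<Rightarrow> 'm \<Rightarrow> bool" where
  "codes_at f k c b \<longleftrightarrow> f (tcode (k, c, b)) \<and> (\<forall>y\<in>underS mu b. \<not> f (tcode (k, c, y)))"

definition decodes :: "('m \<Rightarrow> bool) \<Rightarrow> 'm \<Rightarrow> 'm \<Rightarrow> bool" where
  "decodes f k b \<longleftrightarrow> infinite (underS mu k) \<and> |{c\<in>underS mu k. \<not> codes_at f k c b}| <o |underS mu k|"

definition decoded :: "('m \<Rightarrow> bool) \<Rightarrow> 'm set" where
  "decoded f = {b\<in>Field mu. \<exists>k\<in>cof_set. decodes f k b}"

lemma codes_at_unique: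
  assumes "b \<in> Field mu" "b' \<in> Field mu" "codes_at f k c b" "codes_at f k c b'"
  shows "b = b'"
proof (rule ccontr)
  assume "b \<noteq> b'"
  then have "b \<in> underS mu b' \<or> b' \<in> underS mu b"
    using mu_total[OF assms(1,2)] unfolding underS_def by blast
  then show False using assms(3,4) unfolding codes_at_def by blast
qed

lemma decodes_unique:
  assumes "b \<in> Field mu" "b' \<in> Field mu" "decodes f k b" "decodes f k b'"
  shows "b = b'"
proof (rule ccontr)
  let ?E = "\<lambda>b. {c\<in>underS mu k. \<not> codes_at f k c b}"
  assume "b \<noteq> b'"
  then have "underS mu k \<subseteq> ?E b \<union> ?E b'" using codes_at_unique[OF assms(1,2)] by blast
  moreover have "|?E b \<union> ?E b'| <o |underS mu k|"
    using assms(3,4) card_of_Un_ordLess_infinite unfolding decodes_def by blast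
  ultimately show False using card_of_mono1 not_ordLess_ordLeq by blast
qed

lemma card_decoded: "|decoded f| \<le>o kappa"
proof -
  define choice where "choice k = (SOME b. b \<in> Field mu \<and> decodes f k b)" for k
  have "decoded f \<subseteq> choice ` cof_set"
  proof
    fix b assume "b \<in> decoded f"
    then obtain k where k: "k \<in> cof_set" "b \<in> Field mu" "decodes f k b" unfolding decoded_def by blast
    then have "choice k \<in> Field mu \<and> decodes f k (choice k)"
      unfolding choice_def by (metis (mono_tags, lifting) someI)
    then have "choice k = b" using decodes_unique k(2,3) by blast
    then show "b \<in> choice ` cof_set" using k(1) by blast
  qed
  then have "|decoded f| \<le>o |cof_set|" by (rule ordLeq_transitive[OF card_of_mono1 card_of_image])
  then show ?thesis by (rule ordLeq_ordIso_trans[OF _ cof_set(3)])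
qed

lemma exists_cofinal_point_large:
  fixes A :: "'m set"
  assumes "|A| <o mu"
  shows "\<exists>k\<in>cof_set. |A| <o |underS mu k| \<and> infinite (underS mu k)"
proof -
  obtain a where a: "a \<in> Field mu" "|A| <o |underS mu a|" "infinite (underS mu a)"
    using exists_large_underS[OF assms] by blast
  obtain k where k: "k \<in> cof_set" "(a, k) \<in> mu"
    using cof_set(2) a(1) unfolding cofinal_def by blast
  have "underS mu a \<subseteq> underS mu k" using underS_mono[OF k(2)] by blast
  then show ?thesis
    using k(1) a(2,3) ordLess_ordLeq_trans[OF a(2) card_of_mono1] finite_subset by blast
qed

lemma card_tcode_trace:
  assumes "k \<in> Field mu" "|A| <o |underS mu k|"
  shows "|{c\<in>underS mu k. \<exists>x\<in>Field mu. tcode (k, c, x) \<in> A}| <o |underS mu k|"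
proof -
  let ?c = "\<lambda>y. fst (snd (inv_into (Field mu \<times> Field mu \<times> Field mu) tcode y))"
  have "{c\<in>underS mu k. \<exists>x\<in>Field mu. tcode (k, c, x) \<in> A} \<subseteq> ?c ` A"
  proof
    fix c assume "c \<in> {c\<in>underS mu k. \<exists>x\<in>Field mu. tcode (k, c, x) \<in> A}"
    then obtain x where x: "c \<in> underS mu k" "x \<in> Field mu" "tcode (k, c, x) \<in> A" by blast
    have "c \<in> Field mu" using x(1) underS_Field by fast
    then have "?c (tcode (k, c, x)) = c" using inv_into_f_f[OF tcode(1)] assms(1) x(2) by simp
    then show "c \<in> ?c ` A" using x(3) by (metis imageI)
  qed
  then show ?thesis
    using ordLeq_ordLess_trans[OF ordLeq_transitive[OF card_of_mono1 card_of_image] assms(2)] by blast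
qed

lemma codes_at_indicator_layer:
  assumes k: "k \<in> Field mu" and b: "b \<in> Field mu" and C: "C \<subseteq> underS mu k" "c \<in> C"
    and g: "\<And>y. y \<in> tcode ` ({k} \<times> C \<times> insert b (underS mu b)) \<Longrightarrow>
      g y = (y \<in> tcode ` ({k} \<times> C \<times> {b}))"
  shows "codes_at g k c b"
proof -
  have dom: "{k} \<times> C \<times> insert b (underS mu b) \<subseteq> Field mu \<times> Field mu \<times> Field mu"
    using k b C(1) underS_Field[of _ mu] by blast
  have "g (tcode (k, c, b))" using g C(2) by blast
  moreover have "\<not> g (tcode (k, c, y))" if y: "y \<in> underS mu b" for y
  proof
    assume "g (tcode (k, c, y))"
    then obtain c' where "c' \<in> C" "tcode (k, c, y) = tcode (k, c', b)" using g C(2) y by blast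
    then have "y = b" using inj_onD[OF tcode(1)] dom C(2) y by blast
    then show False using y underS_notIn by fast
  qed
  ultimately show ?thesis unfolding codes_at_def by blast
qed

lemma card_block_ordLess:
  assumes k: "k \<in> Field mu" and b: "b \<in> Field mu"
  shows "|tcode ` ({k} \<times> (underS mu k - T) \<times> insert b (underS mu b))| <o mu"
proof -
  have "|{k}| <o mu" by (rule card_of_finite_ordLess[OF mu_card infinite_Field_mu]) simp
  moreover have "|underS mu k - T| <o mu"
    using ordLeq_ordLess_trans[OF card_of_mono1[OF Diff_subset] card_of_underS[OF mu_card k]] .
  moreover have "|{b} \<union> underS mu b| <o mu"
    by (rule card_of_Un_ordLess_infinite_Field[OF infinite_Field_mu mu_card _ card_of_underS[OF mu_card b]])
      (rule card_of_finite_ordLess[OF mu_card infinite_Field_mu], simp)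
  ultimately have "|{k} \<times> (underS mu k - T) \<times> insert b (underS mu b)| <o mu"
    by (simp add: card_of_Times_ordLess[OF mu_card infinite_Field_mu])
  then show ?thesis by (rule ordLeq_ordLess_trans[OF card_of_image])
qed

lemma extension_forcing_decoded:
  assumes f: "f \<in> Func (Field mu) (UNIV :: bool set)" and A: "A \<subseteq> Field mu" "|A| <o mu"
    and b: "b \<in> Field mu"
  shows "\<exists>f'\<in>cyl (Field mu) UNIV A f. \<exists>A'. A \<subseteq> A' \<and> A' \<subseteq> Field mu \<and> |A'| <o mu \<and>
    (\<forall>g\<in>cyl (Field mu) UNIV A' f'. b \<in> decoded g)"
proof -
  obtain k where k: "k \<in> cof_set" "|A| <o |underS mu k|" "infinite (underS mu k)"
    using exists_cofinal_point_large[OF A(2)] by blast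
  have kM: "k \<in> Field mu" using k(1) cof_set(1) by blast
  \<comment> \<open>the columns below k on which the support A already imposes constraints\<close>
  define T where "T = {c\<in>underS mu k. \<exists>x\<in>Field mu. tcode (k, c, x) \<in> A}"
  define Z where "Z = tcode ` ({k} \<times> (underS mu k - T) \<times> insert b (underS mu b))"
  define Zb where "Zb = tcode ` ({k} \<times> (underS mu k - T) \<times> {b})"
  define f' where "f' y = (if y \<in> Z then y \<in> Zb else f y)" for y
  have dom: "{k} \<times> (underS mu k - T) \<times> insert b (underS mu b) \<subseteq> Field mu \<times> Field mu \<times> Field mu"
    using kM b underS_Field[of _ mu] by blast
  then have ZM: "Z \<subseteq> Field mu" using tcode(2) unfolding Z_def by blast
  have "Z \<inter> A = {}" using dom unfolding Z_def T_def by blast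
  then have f'_cyl: "f' \<in> cyl (Field mu) UNIV A f"
    using f ZM unfolding cyl_def Func_def f'_def by auto
  have "|Z| <o mu" unfolding Z_def by (rule card_block_ordLess[OF kM b])
  then have A': "|A \<union> Z| <o mu" by (rule card_of_Un_ordLess_infinite_Field[OF infinite_Field_mu mu_card A(2)])
  have "b \<in> decoded g" if g: "g \<in> cyl (Field mu) UNIV (A \<union> Z) f'" for g
  proof -
    have "g y = (y \<in> Zb)" if "y \<in> Z" for y using g that unfolding cyl_def f'_def by simp
    then have "codes_at g k c b" if "c \<in> underS mu k - T" for c
      using codes_at_indicator_layer[OF kM b Diff_subset that] unfolding Z_def Zb_def by blast
    then have "{c\<in>underS mu k. \<not> codes_at g k c b} \<subseteq> T" by blast
    then have "|{c\<in>underS mu k. \<not> codes_at g k c b}| <o |underS mu k|"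
      using ordLeq_ordLess_trans[OF card_of_mono1 card_tcode_trace[OF kM k(2)]] unfolding T_def by blast
    then show ?thesis using k(1,3) b unfolding decoded_def decodes_def by blast
  qed
  then show ?thesis using f'_cyl A' A(1) ZM by (intro bexI[of _ f'] exI[of _ "A \<union> Z"]) auto
qed

lemma cf_bracket_le_non_box_bool: "cf_bracket_le_non mu kappa (box_top (Field mu) (UNIV :: bool set) mu)"
proof (rule cf_bracket_le_non_if_nowhere_dense_misses[where C = decoded])
  let ?AA = "{A. A \<subseteq> Field mu \<and> |A| <o mu}"
  have AA: "directed_supports (Field mu) ?AA" by (rule directed_supports_small[OF mu_card infinite_Field_mu])
  have top: "topspace (box_top (Field mu) (UNIV :: bool set) mu) = Func (Field mu) UNIV"
    unfolding box_top_eq_supp_top by (rule topspace_supp_top[OF AA])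
  show "decoded f \<subseteq> Field mu \<and> |decoded f| \<le>o kappa" for f
    using card_decoded unfolding decoded_def by blast
  fix b assume b: "b \<in> Field mu"
  show "nowhere_densein (box_top (Field mu) UNIV mu) {f \<in> topspace (box_top (Field mu) UNIV mu). b \<notin> decoded f}"
    unfolding top unfolding box_top_eq_supp_top
  proof (rule nowhere_densein_supp_topI[OF AA])
    fix f A assume f: "f \<in> Func (Field mu) (UNIV :: bool set)" and "A \<in> ?AA"
    then obtain f' A' where "f' \<in> cyl (Field mu) UNIV A f" "A \<subseteq> A'" "A' \<in> ?AA"
      "\<forall>g\<in>cyl (Field mu) UNIV A' f'. b \<in> decoded g"
      using extension_forcing_decoded[OF f _ _ b] by blast
    then show "\<exists>f'\<in>cyl (Field mu) UNIV A f. \<exists>A'\<in>?AA. A \<subseteq> A' \<and>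
        cyl (Field mu) UNIV A' f' \<inter> {f \<in> Func (Field mu) UNIV. b \<notin> decoded f} = {}"
      by blast
  qed auto
qed

end

theorem mainTheorem11:
  fixes kappa :: "'k rel" and mu :: "'m rel"
  assumes "Card_order kappa" and "infinite (Field kappa)" and "regularCard kappa"
    and "Card_order mu" and "\<not> regularCard mu" and "cofinality_is mu kappa"
  defines "K \<equiv> Field kappa" and "M \<equiv> Field mu" and "Two \<equiv> (UNIV :: bool set)"
  shows
    \<comment> \<open>(1a)\<close>
    "pow_less_le_non M kappa kappa (box_top K M kappa)
     \<comment> \<open>(1b)\<close>
     \<and> pow_less_le_non Two mu kappa (box_top M Two mu)
     \<comment> \<open>(1c)\<close>
     \<and> pow_less_le_non M mu kappa (bd_top mu M)
     \<and> pow_less_le_non M mu kappa (box_top M M mu)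
     \<comment> \<open>(2a)\<close>
     \<and> non_le_non kappa (box_top K K kappa) (box_top K M kappa)
     \<comment> \<open>(2b)\<close>
     \<and> non_le_non kappa (box_top K M kappa) (bd_top mu M)
     \<comment> \<open>(2c)\<close>
     \<and> non_le_non kappa (box_top K M kappa) (box_top M M kappa)
     \<comment> \<open>(2d)\<close>
     \<and> non_le_non kappa (box_top M Two mu) (box_top M M mu)
     \<comment> \<open>(2e)\<close>
     \<and> non_le_non kappa (box_top K K kappa) (box_top M K kappa)
     \<comment> \<open>(2f)\<close>
     \<and> non_le_non kappa (box_top M K kappa) (box_top M M kappa)
     \<comment> \<open>(3)\<close>
     \<and> cf_bracket_le_non mu kappa (box_top K M kappa)
     \<and> cf_bracket_le_non mu kappa (box_top M Two mu)"
proof -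
  interpret singular_cofinality kappa mu using assms(1,2,4,5,6) by unfold_locales
  have kappa_nonempty: "Field kappa \<noteq> {}" using assms(2) by auto
  have card_K: "|Field kappa| =o kappa" by (rule card_of_Field_ordIso[OF assms(1)])
  have card_M: "|Field mu| =o mu" by (rule card_of_Field_ordIso[OF assms(4)])
  have Two_le_M: "|UNIV :: bool set| \<le>o |Field mu|"
    using card_of_finite_ordLess[OF card_of_Card_order, of "Field mu" "UNIV :: bool set"] infinite_Field_mu
    by (simp add: Field_card_of ordLess_imp_ordLeq)
  show ?thesis
    unfolding K_def M_def Two_def
    by (intro conjI pow_less_le_non_box_top[OF assms(1,2) card_K assms(1) kappa_nonempty]
        pow_less_le_non_box_top[OF assms(4) infinite_Field_mu card_M assms(1) kappa_nonempty]
        pow_less_le_non_bd_top non_le_non_box_bd_top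
        non_le_non_box_top_range[OF assms(1,2) kappa_nonempty card_Field_kappa_le_mu]
        non_le_non_box_top_range[OF assms(4) infinite_Field_mu UNIV_not_empty Two_le_M]
        non_le_non_box_top_restrict[OF assms(1,2) card_Field_kappa_le_mu]
        cf_bracket_le_non_box_top[OF assms(1,2) card_K] cf_bracket_le_non_box_bool)
qed

end
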